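(* Let $V\subseteq\mathbb{R}^3$ be a compact convex set and $y$ a point in the interior of $V$. Let $r:=\max_{z'\in\partial V}|z'-y|$, $|V|$ the volume of $V$, and $\Gamma_1:=(2/5)^{2/3}/40$. Then there exists $y'\in V$ such that \[\int_V\big[|x-y|^2-d^2(x,\{y,y'\})\big]\,dx\ \ge\ \max\Big\{\frac{2^2\cdot 3^3}{5^2\cdot 10^3}\,r^2|V|,\ \Gamma_1|V|^{5/3}\Big\},\] where $d(x,\{y,y'\})=\min\{|x-y|,|x-y'|\}$. *)

theory Defs
  imports "HOL-Analysis.Analysis"
begin

end

theory Submission
  imports Defs
begin

(* Moving the second centre to the centroid c of a compact region A \<subseteq> V (c \<in> V by convexity)
   gains at least \<integral>\<^sub>A |x - y|\<^sup>2 - |x - c|\<^sup>2 = |A| |c - y|\<^sup>2, and |c - y| \<ge> \<sigma> whenever every point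
   of A lies at height \<ge> \<sigma> above y in some unit direction.  For the first bound A is the
   homothetic copy of V with ratio 3/10 about a farthest frontier point z, of volume (3/10)\<^sup>3 |V|
   and at height \<ge> 2r/5 in the direction of z.  For the second, the cube of volume 2|V|/5
   centred at y leaves 3|V|/5 of V in the six half-spaces beyond its faces, so one of them holds
   |V|/10 at height \<ge> the half side (|V|/20)\<^sup>1\<^sup>/\<^sup>3. *)

lemma continuous_on_compact_integrable_on:
  fixes f :: "'a::euclidean_space \<Rightarrow> 'b::euclidean_space"
  assumes "compact S" "continuous_on S f"
  shows "f integrable_on S"
  using set_borel_integral_eq_integral(1) borel_integrable_compact[OF assms]
  unfolding set_integrable_def by blast

lemma integral_const_lmeasurable:
  assumes "S \<in> lmeasurable"
  shows "integral S (\<lambda>x. c) = c * measure lebesgue S"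
proof -
  have "integral S (\<lambda>x. c * 1) = c * integral S (\<lambda>x. 1)"
    by (rule integral_mult_right)
  then show ?thesis
    using lmeasure_integral[OF assms] by simp
qed

subsection \<open>Centroids\<close>

definition centroid :: "'a::euclidean_space set \<Rightarrow> 'a" where
  "centroid A = (1 / measure lebesgue A) *\<^sub>R integral A (\<lambda>x. x)"

lemma integral_inner_centroid:
  fixes A :: "'a::euclidean_space set"
  assumes "compact A" "measure lebesgue A \<noteq> 0"
  shows "integral A (\<lambda>x. x \<bullet> a) = measure lebesgue A * (centroid A \<bullet> a)"
proof -
  have "(\<lambda>x. x) integrable_on A"
    using assms(1) by (rule continuous_on_compact_integrable_on) (intro continuous_intros)
  then show ?thesis
    using assms(2) by (simp add: centroid_def integral_component_eq)
qed

lemma centroid_inner_ge: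
  fixes A :: "'a::euclidean_space set"
  assumes "compact A" "measure lebesgue A \<noteq> 0" and "\<And>x. x \<in> A \<Longrightarrow> b \<le> x \<bullet> a"
  shows "b \<le> centroid A \<bullet> a"
proof -
  have A: "A \<in> lmeasurable"
    using assms(1) by (rule lmeasurable_compact)
  have "b * measure lebesgue A = integral A (\<lambda>x. b)"
    using integral_const_lmeasurable[OF A] by simp
  also have "\<dots> \<le> integral A (\<lambda>x. x \<bullet> a)"
  proof (rule integral_le)
    show "(\<lambda>x. x \<bullet> a) integrable_on A"
      using assms(1) by (rule continuous_on_compact_integrable_on) (intro continuous_intros)
  qed (use assms(3) integrable_on_const[OF A] in auto)
  also have "\<dots> = centroid A \<bullet> a * measure lebesgue A"
    using integral_inner_centroid[OF assms(1,2)] by simp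
  finally show ?thesis
    using assms(2) by (simp add: less_le)
qed

lemma centroid_in_closed_convex:
  fixes A :: "'a::euclidean_space set"
  assumes "compact A" "measure lebesgue A \<noteq> 0" "A \<subseteq> S" "closed S" "convex S"
  shows "centroid A \<in> S"
proof (rule ccontr)
  assume "centroid A \<notin> S"
  then obtain a b where ab: "a \<bullet> centroid A < b" "\<forall>x\<in>S. b < a \<bullet> x"
    using separating_hyperplane_closed_point[OF assms(5,4)] by blast
  have "b \<le> centroid A \<bullet> a"
    using assms(3) ab(2) by (intro centroid_inner_ge[OF assms(1,2)]) (auto simp: inner_commute less_imp_le)
  then show False
    using ab(1) by (simp add: inner_commute)
qed

lemma integral_sqdist_diff_centroid:
  fixes A :: "'a::euclidean_space set"
  assumes "compact A" "measure lebesgue A \<noteq> 0"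
  shows "integral A (\<lambda>x. (dist x y)\<^sup>2 - (dist x (centroid A))\<^sup>2)
    = measure lebesgue A * (dist (centroid A) y)\<^sup>2"
proof -
  define c where "c = centroid A"
  define m where "m = measure lebesgue A"
  have A: "A \<in> lmeasurable"
    using assms(1) by (rule lmeasurable_compact)
  have "(dist x y)\<^sup>2 - (dist x c)\<^sup>2 = 2 * (x \<bullet> (c - y)) + (y \<bullet> y - c \<bullet> c)" for x
    by (simp add: dist_norm power2_norm_eq_inner inner_diff_left inner_diff_right inner_commute algebra_simps)
  then have "integral A (\<lambda>x. (dist x y)\<^sup>2 - (dist x c)\<^sup>2)
      = integral A (\<lambda>x. 2 * (x \<bullet> (c - y)) + (y \<bullet> y - c \<bullet> c))"
    by simp
  also have "\<dots> = 2 * integral A (\<lambda>x. x \<bullet> (c - y)) + (y \<bullet> y - c \<bullet> c) * m"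
  proof -
    have "(\<lambda>x. x \<bullet> (c - y)) integrable_on A"
      using assms(1) by (rule continuous_on_compact_integrable_on) (intro continuous_intros)
    from integral_add[OF integrable_on_cmult_left[OF this, of 2] integrable_on_const[OF A]]
    show ?thesis
      using integral_const_lmeasurable[OF A] by (simp add: m_def)
  qed
  also have "\<dots> = m * (2 * (c \<bullet> (c - y)) + (y \<bullet> y - c \<bullet> c))"
    by (subst integral_inner_centroid[OF assms]) (simp add: c_def m_def algebra_simps)
  also have "\<dots> = m * (dist c y)\<^sup>2"
    by (simp add: dist_norm power2_norm_eq_inner inner_diff_left inner_diff_right inner_commute algebra_simps)
  finally show ?thesis
    unfolding c_def m_def .
qed

subsection \<open>The gain of a second centre\<close>

definition distortion_gain :: "'a::euclidean_space set \<Rightarrow> 'a \<Rightarrow> 'a \<Rightarrow> real" where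
  "distortion_gain V y y' = integral V (\<lambda>x. (dist x y)\<^sup>2 - (min (dist x y) (dist x y'))\<^sup>2)"

lemma integrable_on_distortion_gain:
  fixes V :: "'a::euclidean_space set"
  assumes "compact V"
  shows "(\<lambda>x. (dist x y)\<^sup>2 - (min (dist x y) (dist x y'))\<^sup>2) integrable_on V"
  using assms by (rule continuous_on_compact_integrable_on) (intro continuous_intros)

lemma distortion_gain_nonneg:
  fixes V :: "'a::euclidean_space set"
  assumes "compact V"
  shows "0 \<le> distortion_gain V y y'"
  unfolding distortion_gain_def
  using integrable_on_distortion_gain[OF assms] by (intro integral_nonneg) (auto simp: power_mono)

lemma integral_sqdist_diff_le_distortion_gain:
  fixes V :: "'a::euclidean_space set"
  assumes "compact V" "compact A" "A \<subseteq> V"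
  shows "integral A (\<lambda>x. (dist x y)\<^sup>2 - (dist x y')\<^sup>2) \<le> distortion_gain V y y'"
proof -
  have "integral A (\<lambda>x. (dist x y)\<^sup>2 - (dist x y')\<^sup>2)
      \<le> integral A (\<lambda>x. (dist x y)\<^sup>2 - (min (dist x y) (dist x y'))\<^sup>2)"
  proof (rule integral_le)
    show "(\<lambda>x. (dist x y)\<^sup>2 - (dist x y')\<^sup>2) integrable_on A"
      using assms(2) by (rule continuous_on_compact_integrable_on) (intro continuous_intros)
  qed (use integrable_on_distortion_gain[OF assms(2)] in \<open>auto simp: power_mono\<close>)
  also have "\<dots> \<le> distortion_gain V y y'"
    unfolding distortion_gain_def
    using integrable_on_distortion_gain[OF assms(2)] integrable_on_distortion_gain[OF assms(1)] assms(3)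
    by (intro integral_subset_le) (auto simp: power_mono)
  finally show ?thesis .
qed

lemma exists_distortion_gain_ge:
  fixes V A :: "'a::euclidean_space set"
  assumes V: "compact V" "convex V" "y \<in> V" and A: "compact A" "A \<subseteq> V"
    and height: "\<And>x. x \<in> A \<Longrightarrow> \<sigma> \<le> (x - y) \<bullet> e" and "norm e \<le> 1" "0 \<le> \<sigma>"
  shows "\<exists>y'\<in>V. measure lebesgue A * \<sigma>\<^sup>2 \<le> distortion_gain V y y'"
proof (cases "measure lebesgue A = 0")
  case True
  then show ?thesis
    using V(3) distortion_gain_nonneg[OF V(1)] by auto
next
  case False
  define c where "c = centroid A"
  have "c \<in> V"
    unfolding c_def using A False V(1,2) by (intro centroid_in_closed_convex) (auto intro: compact_imp_closed)
  have "\<sigma> \<le> (c - y) \<bullet> e"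
    using centroid_inner_ge[OF A(1) False, of "\<sigma> + y \<bullet> e" e] height
    by (simp add: c_def inner_diff_left algebra_simps)
  also have "\<dots> \<le> norm (c - y) * norm e"
    by (rule norm_cauchy_schwarz)
  also have "\<dots> \<le> dist c y"
    using \<open>norm e \<le> 1\<close> by (simp add: dist_norm mult_left_le)
  finally have "\<sigma>\<^sup>2 \<le> (dist c y)\<^sup>2"
    using \<open>0 \<le> \<sigma>\<close> by (rule power_mono)
  then have "measure lebesgue A * \<sigma>\<^sup>2 \<le> integral A (\<lambda>x. (dist x y)\<^sup>2 - (dist x c)\<^sup>2)"
    unfolding c_def integral_sqdist_diff_centroid[OF A(1) False] by (simp add: mult_left_mono)
  also have "\<dots> \<le> distortion_gain V y c"
    using V(1) A by (rule integral_sqdist_diff_le_distortion_gain)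
  finally show ?thesis
    using \<open>c \<in> V\<close> by blast
qed

subsection \<open>A farthest point and a homothetic copy\<close>

lemma exists_frontier_point_farther:
  fixes V :: "'a::euclidean_space set"
  assumes "bounded V" "convex V" "y \<in> interior V" "x \<in> V"
  shows "\<exists>p\<in>frontier V. dist x y \<le> dist p y"
proof (cases "x = y")
  case True
  have "V \<noteq> {}" "V \<noteq> UNIV"
    using assms(1,4) not_bounded_UNIV by auto
  then have "frontier V \<noteq> {}"
    by (rule frontier_not_empty)
  then show ?thesis
    using True by auto
next
  case False
  obtain d where d: "0 < d" "y + d *\<^sub>R (x - y) \<in> frontier V"
    using ray_to_frontier[OF assms(1,3), of "x - y"] False by auto
  have "1 \<le> d"
  proof (rule ccontr)
    assume "\<not> 1 \<le> d"
    then have "y + d *\<^sub>R (x - y) \<in> open_segment y x"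
      using d(1) False unfolding in_segment by (intro conjI exI[of _ d]) (auto simp: algebra_simps)
    then have "y + d *\<^sub>R (x - y) \<in> interior V"
      using in_interior_closure_convex_segment[OF assms(2,3)] assms(4) closure_subset by blast
    then show False
      using d(2) by (simp add: frontier_def)
  qed
  then have "dist x y \<le> dist (y + d *\<^sub>R (x - y)) y"
    using d(1) by (simp add: dist_norm mult_le_cancel_right1)
  then show ?thesis
    using d(2) by blast
qed

lemma exists_farthest_frontier_point:
  fixes V :: "'a::euclidean_space set"
  assumes "compact V" "convex V" "y \<in> interior V"
  shows "\<exists>z\<in>frontier V. \<forall>x\<in>V. dist x y \<le> dist z y"
proof -
  have "y \<in> V"
    using assms(3) interior_subset by blast
  then have "frontier V \<noteq> {}"
    using exists_frontier_point_farther[OF compact_imp_bounded[OF assms(1)] assms(2,3)] by blast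
  moreover have "continuous_on (frontier V) (\<lambda>p. dist p y)"
    by (intro continuous_intros)
  ultimately obtain z where z: "z \<in> frontier V" "\<forall>p\<in>frontier V. dist p y \<le> dist z y"
    using continuous_attains_sup[OF compact_frontier[OF assms(1)]] by blast
  have "dist x y \<le> dist z y" if "x \<in> V" for x
    using exists_frontier_point_farther[OF compact_imp_bounded[OF assms(1)] assms(2,3) that] z(2)
    by force
  then show ?thesis
    using z(1) by blast
qed

lemma exists_distortion_gain_ge_homothety:
  fixes V :: "'a::euclidean_space set"
  assumes V: "compact V" "convex V" "y \<in> V"
    and z: "z \<in> V" "\<And>x. x \<in> V \<Longrightarrow> dist x y \<le> dist z y" and t: "0 \<le> t" "t \<le> 1/2"
  shows "\<exists>y'\<in>V. t ^ DIM('a) * ((1 - 2 * t) * dist z y)\<^sup>2 * measure lebesgue V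
    \<le> distortion_gain V y y'"
proof -
  define r where "r = dist z y"
  \<comment> \<open>If \<open>r = 0\<close> then \<open>e = 0\<close>; this is why \<open>exists_distortion_gain_ge\<close> only asks for \<open>norm e \<le> 1\<close>.\<close>
  define e where "e = (1 / r) *\<^sub>R (z - y)"
  have "norm e \<le> 1"
    by (simp add: e_def r_def dist_norm divide_le_eq_1)
  have "(z - y) \<bullet> e = r"
    by (simp add: e_def r_def dist_norm power2_norm_eq_inner[symmetric] power2_eq_square)
  have above_neg_r: "- r \<le> (x - y) \<bullet> e" if "x \<in> V" for x
  proof -
    have "- ((x - y) \<bullet> e) \<le> norm (x - y) * norm e"
      using norm_cauchy_schwarz[of "y - x" e] by (simp add: inner_diff_left norm_minus_commute)
    also have "\<dots> \<le> r"
      using z(2)[OF that] mult_left_le[OF \<open>norm e \<le> 1\<close>, of "norm (x - y)"]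
      by (simp add: r_def dist_norm)
    finally show ?thesis by simp
  qed
  define A where "A = (\<lambda>x. t *\<^sub>R x + (1 - t) *\<^sub>R z) ` V"
  have "A \<subseteq> V"
    unfolding A_def using V(2) z(1) t by (auto simp: convex_def)
  have "compact A"
    unfolding A_def by (rule compact_continuous_image[OF _ V(1)]) (intro continuous_intros)
  have "measure lebesgue A = t ^ DIM('a) * measure lebesgue V"
    unfolding A_def using measure_lebesgue_affine[of t "(1 - t) *\<^sub>R z" V] t by simp
  moreover have "(1 - 2 * t) * r \<le> (a - y) \<bullet> e" if a: "a \<in> A" for a
  proof -
    obtain x where x: "x \<in> V" "a = t *\<^sub>R x + (1 - t) *\<^sub>R z"
      using a unfolding A_def by blast
    then have "a - y = t *\<^sub>R (x - y) + (1 - t) *\<^sub>R (z - y)"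
      by (simp add: algebra_simps)
    then have "(a - y) \<bullet> e = t * ((x - y) \<bullet> e) + (1 - t) * r"
      using \<open>(z - y) \<bullet> e = r\<close> by (simp add: inner_add_left)
    then show ?thesis
      using above_neg_r[OF x(1)] t mult_left_mono[of "- r" "(x - y) \<bullet> e" t]
      by (simp add: algebra_simps)
  qed
  ultimately show ?thesis
    using exists_distortion_gain_ge[OF V \<open>compact A\<close> \<open>A \<subseteq> V\<close> _ \<open>norm e \<le> 1\<close>, of "(1 - 2 * t) * r"] t
    by (simp add: r_def mult_ac)
qed

subsection \<open>A cube and the half-spaces beyond its faces\<close>

lemma measure_cbox_centred:
  fixes y :: "'a::euclidean_space"
  assumes "0 \<le> \<rho>"
  shows "measure lebesgue (cbox (y - \<rho> *\<^sub>R One) (y + \<rho> *\<^sub>R One)) = (2 * \<rho>) ^ DIM('a)"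
  using assms by (simp add: content_cbox_cases inner_diff_left inner_add_left inner_commute[of _ One])

lemma exists_halfspace_measure_ge:
  fixes V :: "'a::euclidean_space set"
  assumes "compact V" "0 \<le> \<rho>"
  shows "\<exists>e. norm e = 1 \<and> measure lebesgue V - (2 * \<rho>) ^ DIM('a)
    \<le> 2 * DIM('a) * measure lebesgue (V \<inter> {x. \<rho> \<le> (x - y) \<bullet> e})"
proof -
  define Q where "Q = cbox (y - \<rho> *\<^sub>R One) (y + \<rho> *\<^sub>R (One::'a))"
  define E where "E = (Basis :: 'a set) \<union> uminus ` Basis"
  define H where "H e = V \<inter> {x. \<rho> \<le> (x - y) \<bullet> e}" for e
  have "finite E" "E \<noteq> {}"
    unfolding E_def using nonempty_Basis by auto
  have "card E \<le> 2 * DIM('a)"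
    unfolding E_def using card_Un_le[of "Basis :: 'a set" "uminus ` Basis"] card_image_le[of "Basis :: 'a set" uminus]
    by simp
  have H: "H e \<in> lmeasurable" for e
    unfolding H_def
    by (intro lmeasurable_compact compact_Int_closed assms(1) closed_Collect_le) (auto intro!: continuous_intros)
  have "V \<subseteq> Q \<union> (\<Union>e\<in>E. H e)"
  proof
    fix x assume "x \<in> V"
    show "x \<in> Q \<union> (\<Union>e\<in>E. H e)"
    proof (cases "x \<in> Q")
      case False
      then obtain i where i: "i \<in> Basis" "x \<bullet> i < y \<bullet> i - \<rho> \<or> y \<bullet> i + \<rho> < x \<bullet> i"
        unfolding Q_def mem_box by (auto simp: inner_diff_left inner_add_left inner_commute[of _ One] not_le)
      then have "x \<in> H (- i) \<or> x \<in> H i"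
        using \<open>x \<in> V\<close> by (auto simp: H_def inner_diff_left)
      moreover have "i \<in> E" "- i \<in> E"
        unfolding E_def using i(1) by auto
      ultimately show ?thesis
        by blast
    qed simp
  qed
  moreover have "Q \<union> (\<Union>e\<in>E. H e) \<in> lmeasurable"
    using H \<open>finite E\<close> by (intro fmeasurable.Un fmeasurable.finite_UN) (auto simp: Q_def)
  ultimately have "measure lebesgue V \<le> measure lebesgue (Q \<union> (\<Union>e\<in>E. H e))"
    using fmeasurableD[OF lmeasurable_compact[OF assms(1)]] by (intro measure_mono_fmeasurable)
  also have "\<dots> \<le> measure lebesgue Q + (\<Sum>e\<in>E. measure lebesgue (H e))"
    using H \<open>finite E\<close> measure_UNION_le[of E H lebesgue]
    by (intro order_trans[OF measure_Un_le] add_left_mono) (auto simp: Q_def dest: fmeasurableD)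
  finally have cover: "measure lebesgue V - (2 * \<rho>) ^ DIM('a) \<le> (\<Sum>e\<in>E. measure lebesgue (H e))"
    using measure_cbox_centred[OF assms(2), of y] by (simp add: Q_def)
  define M where "M = (MAX e\<in>E. measure lebesgue (H e))"
  obtain e where e: "e \<in> E" "measure lebesgue (H e) = M"
    using Max_in[of "(\<lambda>e. measure lebesgue (H e)) ` E"] \<open>finite E\<close> \<open>E \<noteq> {}\<close>
    unfolding M_def by fastforce
  have "(\<Sum>e\<in>E. measure lebesgue (H e)) \<le> card E * measure lebesgue (H e)"
    unfolding e(2) M_def by (intro sum_bounded_above Max_ge) (auto simp: \<open>finite E\<close>)
  also have "\<dots> \<le> 2 * DIM('a) * measure lebesgue (H e)"
    using \<open>card E \<le> 2 * DIM('a)\<close> by (intro mult_right_mono) auto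
  finally have "measure lebesgue V - (2 * \<rho>) ^ DIM('a) \<le> 2 * DIM('a) * measure lebesgue (H e)"
    using cover by linarith
  moreover have "norm e = 1"
    using e(1) unfolding E_def by auto
  ultimately show ?thesis
    unfolding H_def by blast
qed

lemma exists_distortion_gain_ge_cube:
  fixes V :: "'a::euclidean_space set"
  assumes V: "compact V" "convex V" "y \<in> V" and "0 \<le> \<rho>"
  shows "\<exists>y'\<in>V. (measure lebesgue V - (2 * \<rho>) ^ DIM('a)) * \<rho>\<^sup>2
    \<le> 2 * DIM('a) * distortion_gain V y y'"
proof -
  define H where "H e = V \<inter> {x. \<rho> \<le> (x - y) \<bullet> e}" for e
  obtain e where "norm e = 1" and
    big: "measure lebesgue V - (2 * \<rho>) ^ DIM('a) \<le> 2 * DIM('a) * measure lebesgue (H e)"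
    using exists_halfspace_measure_ge[OF V(1) \<open>0 \<le> \<rho>\<close>, of y] unfolding H_def by blast
  have "compact (H e)"
    unfolding H_def by (intro compact_Int_closed V(1) closed_Collect_le) (auto intro!: continuous_intros)
  moreover have "H e \<subseteq> V" "\<And>x. x \<in> H e \<Longrightarrow> \<rho> \<le> (x - y) \<bullet> e"
    by (auto simp: H_def)
  ultimately obtain y' where "y' \<in> V" and gain: "measure lebesgue (H e) * \<rho>\<^sup>2 \<le> distortion_gain V y y'"
    using exists_distortion_gain_ge[OF V] \<open>norm e = 1\<close> \<open>0 \<le> \<rho>\<close> by (metis order_refl)
  have "(measure lebesgue V - (2 * \<rho>) ^ DIM('a)) * \<rho>\<^sup>2 \<le> 2 * DIM('a) * measure lebesgue (H e) * \<rho>\<^sup>2"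
    using big by (rule mult_right_mono) simp
  also have "\<dots> \<le> 2 * DIM('a) * distortion_gain V y y'"
    using gain by (simp add: mult.assoc)
  finally show ?thesis
    using \<open>y' \<in> V\<close> by blast
qed

lemma powr_volume_identity:
  fixes m :: real
  assumes "0 \<le> m"
  shows "(2/5) powr (2/3) / 40 * m powr (5/3) = m / 10 * ((m / 20) powr (1/3))\<^sup>2"
proof -
  have "((m / 20) powr (1/3))\<^sup>2 = (m / 20) powr (2/3)"
    using assms by (simp add: powr_realpow'[symmetric] powr_powr)
  have "(8::real) powr (2/3) = 4"
    using powr_powr[of 2 3 "2/3"] by simp
  have "(2/5) powr (2/3) * m powr (2/3) = (8 * (m / 20)) powr (2/3)"
    using assms by (simp add: powr_mult[symmetric])
  also have "\<dots> = 4 * (m / 20) powr (2/3)"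
    using assms powr_mult[of 8 "m / 20" "2/3"] \<open>8 powr (2/3) = 4\<close> by simp
  finally have "(2/5) powr (2/3) * m powr (2/3) = 4 * (m / 20) powr (2/3)" .
  moreover have "m powr (5/3) = m * m powr (2/3)"
    using assms powr_add[of m 1 "2/3"] by simp
  ultimately show ?thesis
    using \<open>((m / 20) powr (1/3))\<^sup>2 = (m / 20) powr (2/3)\<close> by (simp add: mult_ac)
qed

lemma exists_distortion_gain_ge_volume_powr:
  fixes V :: "(real^3) set"
  assumes "compact V" "convex V" "y \<in> V"
  shows "\<exists>y'\<in>V. (2/5) powr (2/3) / 40 * measure lebesgue V powr (5/3) \<le> distortion_gain V y y'"
proof -
  define m where "m = measure lebesgue V"
  define \<rho> where "\<rho> = (m / 20) powr (1/3)"
  have "0 \<le> m"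
    by (simp add: m_def)
  have "\<rho> ^ 3 = m / 20"
    using \<open>0 \<le> m\<close> by (simp add: \<rho>_def powr_realpow'[symmetric] powr_powr)
  obtain y' where "y' \<in> V" and gain: "(m - (2 * \<rho>) ^ 3) * \<rho>\<^sup>2 \<le> 6 * distortion_gain V y y'"
    using exists_distortion_gain_ge_cube[OF assms, of \<rho>] by (auto simp: \<rho>_def m_def)
  have "(2 * \<rho>) ^ 3 = 2 * m / 5"
    using \<open>\<rho> ^ 3 = m / 20\<close> by (simp add: power_mult_distrib)
  have "(m - (2 * \<rho>) ^ 3) * \<rho>\<^sup>2 = 6 * (m / 10 * \<rho>\<^sup>2)"
    unfolding \<open>(2 * \<rho>) ^ 3 = 2 * m / 5\<close> by (simp add: field_simps)
  also have "m / 10 * \<rho>\<^sup>2 = (2/5) powr (2/3) / 40 * m powr (5/3)"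
    unfolding \<rho>_def using \<open>0 \<le> m\<close> by (rule powr_volume_identity[symmetric])
  finally have "(2/5) powr (2/3) / 40 * m powr (5/3) \<le> distortion_gain V y y'"
    using gain by linarith
  then show ?thesis
    using \<open>y' \<in> V\<close> unfolding m_def by blast
qed

theorem lemma3p1:
  fixes V :: "(real^3) set" and y :: "real^3"
  assumes "compact V" and "convex V" and "y \<in> interior V"
  shows "\<exists>y'\<in>V.
    integral V (\<lambda>x. (dist x y)\<^sup>2 - (min (dist x y) (dist x y'))\<^sup>2)
      \<ge> max ((2^2 * 3^3) / (5^2 * 10^3) * (SUP z\<in>frontier V. dist z y)\<^sup>2 * measure lebesgue V)
             (((2/5) powr (2/3) / 40) * (measure lebesgue V) powr (5/3))"
proof -
  define c\<^sub>1 where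
    "c\<^sub>1 = (2^2 * 3^3) / (5^2 * 10^3) * (SUP z\<in>frontier V. dist z y)\<^sup>2 * measure lebesgue V"
  define c\<^sub>2 where "c\<^sub>2 = (2/5) powr (2/3) / 40 * measure lebesgue V powr (5/3)"
  have "y \<in> V"
    using assms(3) interior_subset by blast
  obtain z where z: "z \<in> frontier V" and farthest: "\<forall>x\<in>V. dist x y \<le> dist z y"
    using exists_farthest_frontier_point[OF assms] by blast
  have "frontier V \<subseteq> V"
    using assms(1) by (simp add: compact_imp_closed frontier_subset_closed)
  then have "(SUP p\<in>frontier V. dist p y) = dist z y"
    using z farthest by (intro cSup_eq_maximum) auto
  moreover obtain y\<^sub>1 where "y\<^sub>1 \<in> V"
    "(3/10) ^ 3 * ((1 - 2 * (3/10)) * dist z y)\<^sup>2 * measure lebesgue V \<le> distortion_gain V y y\<^sub>1"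
    using exists_distortion_gain_ge_homothety[OF assms(1,2) \<open>y \<in> V\<close>, of z "3/10"] z farthest
      \<open>frontier V \<subseteq> V\<close> by auto
  ultimately have "c\<^sub>1 \<le> distortion_gain V y y\<^sub>1"
    by (simp add: c\<^sub>1_def power_mult_distrib power_divide)
  moreover obtain y\<^sub>2 where "y\<^sub>2 \<in> V" "c\<^sub>2 \<le> distortion_gain V y y\<^sub>2"
    unfolding c\<^sub>2_def using exists_distortion_gain_ge_volume_powr[OF assms(1,2) \<open>y \<in> V\<close>] by blast
  ultimately have "\<exists>y'\<in>V. max c\<^sub>1 c\<^sub>2 \<le> distortion_gain V y y'"
    using \<open>y\<^sub>1 \<in> V\<close> by (auto simp: max_def)
  then show ?thesis
    unfolding c\<^sub>1_def c\<^sub>2_def distortion_gain_def .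
qed

end
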